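(* Let $\mathbf i\in\mathbb C$ with $\mathbf i^2=-1$ and let $\beta_m=[x^m]\Big(\frac{1+x}{1+\mathbf i}\prod_{k=0}^\infty\big(1+\mathbf i\,x^{2^k}\big)\Big)$ for $m\ge0$. For $n\ge1$, let $H(n)$ be the $n\times n$ Hankel matrix with entries $H(n)_{a,b}=\beta_{a+b+1}$, $0\le a,b<n$. Then $\det(H(n))=(-\mathbf i)^{\lfloor n/2\rfloor}$.
   Context: $[x^m]f$ denotes the coefficient of $x^m$ in the formal power series $f\in\mathbb C[[x]]$. *)

theory Defs
  imports "HOL-Computational_Algebra.Formal_Power_Series" "Jordan_Normal_Form.Determinant"
begin

definition tm_prod :: "complex fps" where
  "tm_prod = lim (\<lambda>N. \<Prod>k<N. (1 + fps_const \<i> * fps_X ^ (2 ^ k)))"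

definition beta_fps :: "complex fps" where
  "beta_fps = fps_const (1 / (1 + \<i>)) * (1 + fps_X) * tm_prod"

definition beta :: "nat \<Rightarrow> complex" where
  "beta m = fps_nth beta_fps m"

definition hankelH :: "nat \<Rightarrow> complex mat" where
  "hankelH n = mat n n (\<lambda>(a, b). beta (a + b + 1))"

end

theory Submission
  imports Defs
begin

text \<open>The coefficients of the product are \<open>t(n) = \<i>^s(n)\<close>, where \<open>s(n)\<close> is the binary
  digit sum of \<open>n\<close>; thus \<open>t(2n) = t(n)\<close>, \<open>t(2n+1) = \<i> t(n)\<close> and
  \<open>(1 + \<i>) \<beta>\<^sub>k\<^sub>+\<^sub>1 = t(k) + t(k+1)\<close>. Reordering the rows and columns of a Hankel matrix by
  the parity of their index and clearing the odd columns with the relation \<open>t(2j+1) = \<i> t(2j)\<close>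
  expresses the Hankel determinants of \<open>t\<close>, of \<open>P\<^sub>e(k) = t(k) + e t(k+1)\<close> (\<open>e = \<plusminus>1\<close>) and
  of \<open>V(k) = t(k+2) - t(k)\<close> through Hankel determinants of half the size. Strong induction
  on the size then gives \<open>det H\<^sub>n(P\<^sub>e) = (1 + \<i>e)^n (-\<i>e)^\<lfloor>n/2\<rfloor>\<close> together with
  \<open>det H\<^sub>n\<^sub>+\<^sub>1(t) det H\<^sub>n(V) = (-2)^n\<close>. Below, \<open>t\<close>, \<open>P\<^sub>e\<close> and \<open>V\<close> are \<open>tm\<close>,
  \<open>tm_comb e\<close> and \<open>tm_diff2\<close>.\<close>

fun tm :: "nat \<Rightarrow> complex" where
  "tm n = (if n = 0 then 1 else (if odd n then \<i> else 1) * tm (n div 2))"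

declare tm.simps [simp del]

lemma tm_0 [simp]: "tm 0 = 1"
  by (simp add: tm.simps)

lemma tm_double [simp]: "tm (2 * n) = tm n"
  by (cases "n = 0") (simp_all add: tm.simps[of "2 * n"])

lemma tm_Suc_double [simp]: "tm (Suc (2 * n)) = \<i> * tm n"
  by (simp add: tm.simps[of "Suc (2 * n)"])

lemma tm_pow2_add: "r < 2 ^ N \<Longrightarrow> tm (2 ^ N + r) = \<i> * tm r"
proof (induction N arbitrary: r)
  case 0
  then show ?case
    using tm_Suc_double[of 0] by simp
next
  case (Suc N)
  have IH: "tm (2 ^ N + r div 2) = \<i> * tm (r div 2)"
    using Suc by (intro Suc.IH) (simp add: less_mult_imp_div_less)
  show ?case
  proof (cases "even r")
    case True
    then have "2 ^ Suc N + r = 2 * (2 ^ N + r div 2)" and "r = 2 * (r div 2)"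
      by simp_all
    then show ?thesis
      using IH by (metis tm_double)
  next
    case False
    then have "2 ^ Suc N + r = Suc (2 * (2 ^ N + r div 2))" and "r = Suc (2 * (r div 2))"
      by simp_all
    then show ?thesis
      using IH by (metis tm_Suc_double)
  qed
qed

lemma tm_partial_prod_nth:
  "fps_nth (\<Prod>k<N. 1 + fps_const \<i> * fps_X ^ 2 ^ k) m = (if m < 2 ^ N then tm m else 0)"
proof (induction N arbitrary: m)
  case 0
  then show ?case by simp
next
  case (Suc N)
  define P where "P = (\<Prod>k<N. 1 + fps_const \<i> * fps_X ^ 2 ^ k)"
  have "(\<Prod>k<Suc N. 1 + fps_const \<i> * fps_X ^ 2 ^ k) = P + fps_const \<i> * (P * fps_X ^ 2 ^ N)"
    by (simp add: P_def algebra_simps)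
  then have "fps_nth (\<Prod>k<Suc N. 1 + fps_const \<i> * fps_X ^ 2 ^ k) m
      = fps_nth P m + \<i> * (if m < 2 ^ N then 0 else fps_nth P (m - 2 ^ N))"
    by (simp add: fps_X_power_mult_right_nth)
  then show ?case
    using Suc.IH[folded P_def] tm_pow2_add[of "m - 2 ^ N" N] by auto
qed

lemma tm_prod_eq: "tm_prod = Abs_fps tm"
proof -
  have "(\<lambda>N. \<Prod>k<N. 1 + fps_const \<i> * fps_X ^ 2 ^ k) \<longlonglongrightarrow> Abs_fps tm"
  proof (rule tendsto_fpsI)
    fix m :: nat
    have "eventually (\<lambda>N. m < 2 ^ N) sequentially"
      by (rule eventually_sequentiallyI[where c = m])
        (meson less_exp less_le_trans one_le_numeral power_increasing)
    then show "eventually (\<lambda>N. fps_nth (\<Prod>k<N. 1 + fps_const \<i> * fps_X ^ 2 ^ k) m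
        = fps_nth (Abs_fps tm) m) sequentially"
      by eventually_elim (simp add: tm_partial_prod_nth)
  qed
  then show ?thesis
    unfolding tm_prod_def by (rule limI)
qed

lemma beta_Suc: "beta (Suc k) = (tm k + tm (Suc k)) / (1 + \<i>)"
proof -
  have beta_fps_eq: "beta_fps = fps_const (1 / (1 + \<i>)) * (Abs_fps tm + fps_X * Abs_fps tm)"
    unfolding beta_fps_def tm_prod_eq by (simp add: algebra_simps)
  have "beta (Suc k) = 1 / (1 + \<i>) * (tm (Suc k) + tm k)"
    unfolding beta_def beta_fps_eq
    by (simp only: fps_mult_left_const_nth fps_add_nth fps_X_mult_nth) simp
  then show ?thesis
    by (simp add: add.commute)
qed

definition hankel_mat :: "nat \<Rightarrow> nat \<Rightarrow> (nat \<Rightarrow> 'a) \<Rightarrow> 'a mat" where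
  "hankel_mat r c s = mat r c (\<lambda>(i, j). s (i + j))"

lemma hankel_mat_carrier [simp]: "hankel_mat r c s \<in> carrier_mat r c"
  by (simp add: hankel_mat_def)

lemma dim_hankel_mat [simp]:
  "dim_row (hankel_mat r c s) = r" "dim_col (hankel_mat r c s) = c"
  by (simp_all add: hankel_mat_def)

lemma index_hankel_mat [simp]: "i < r \<Longrightarrow> j < c \<Longrightarrow> hankel_mat r c s $$ (i, j) = s (i + j)"
  by (simp add: hankel_mat_def)

lemma smult_hankel_mat: "x \<cdot>\<^sub>m hankel_mat r c s = hankel_mat r c (\<lambda>j. x * s j)"
  by (rule eq_matI) auto

lemma add_hankel_mat: "hankel_mat r c s + hankel_mat r c s' = hankel_mat r c (\<lambda>j. s j + s' j)"
  by (rule eq_matI) auto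

lemma hankel_mat_mult_smult_one:
  fixes s :: "nat \<Rightarrow> 'a :: comm_ring_1"
  shows "hankel_mat r c s * (x \<cdot>\<^sub>m 1\<^sub>m c) = hankel_mat r c (\<lambda>j. x * s j)"
  by (subst mult_smult_distrib[of _ r c _ c]) (auto simp: smult_hankel_mat)

lemma smult_one_mult_hankel_mat:
  fixes s :: "nat \<Rightarrow> 'a :: comm_ring_1"
  shows "(x \<cdot>\<^sub>m 1\<^sub>m r) * hankel_mat r c s = hankel_mat r c (\<lambda>j. x * s j)"
  by (subst mult_smult_assoc_mat[of _ r r _ c]) (auto simp: smult_hankel_mat)

lemma det_hankel_mat_smult:
  "det (hankel_mat n n (\<lambda>j. x * s j)) = x ^ n * det (hankel_mat n n s)"
  by (simp flip: smult_hankel_mat)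

lemma det_four_block_mat_col_op_right:
  fixes A :: "'a :: idom mat"
  assumes A: "A \<in> carrier_mat n n" and B: "B \<in> carrier_mat n m"
    and C: "C \<in> carrier_mat m n" and D: "D \<in> carrier_mat m m" and X: "X \<in> carrier_mat n m"
  shows "det (four_block_mat A B C D) = det (four_block_mat A (A * X + B) C (C * X + D))"
proof -
  let ?R = "four_block_mat (1\<^sub>m n) X (0\<^sub>m m n) (1\<^sub>m m)"
  have "det ?R = 1"
    using X by (subst det_four_block_mat_lower_left_zero[of _ n _ m]) auto
  moreover have "four_block_mat A B C D * ?R = four_block_mat A (A * X + B) C (C * X + D)"
    using A B C D X by (subst mult_four_block_mat[OF A B C D]) auto
  ultimately show ?thesis
    using det_mult[of "four_block_mat A B C D" "n + m" ?R] A B C D X by auto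
qed

lemma det_four_block_mat_col_op_left:
  fixes A :: "'a :: idom mat"
  assumes A: "A \<in> carrier_mat n n" and B: "B \<in> carrier_mat n m"
    and C: "C \<in> carrier_mat m n" and D: "D \<in> carrier_mat m m" and Y: "Y \<in> carrier_mat m n"
  shows "det (four_block_mat A B C D) = det (four_block_mat (A + B * Y) B (C + D * Y) D)"
proof -
  let ?R = "four_block_mat (1\<^sub>m n) (0\<^sub>m n m) Y (1\<^sub>m m)"
  have "det ?R = 1"
    using Y by (subst det_four_block_mat_upper_right_zero[of _ n _ m]) auto
  moreover have "four_block_mat A B C D * ?R = four_block_mat (A + B * Y) B (C + D * Y) D"
    using A B C D Y by (subst mult_four_block_mat[OF A B C D]) auto
  ultimately show ?thesis
    using det_mult[of "four_block_mat A B C D" "n + m" ?R] A B C D Y by auto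
qed

lemma det_four_block_mat_row_op_lower:
  fixes A :: "'a :: idom mat"
  assumes A: "A \<in> carrier_mat n n" and B: "B \<in> carrier_mat n m"
    and C: "C \<in> carrier_mat m n" and D: "D \<in> carrier_mat m m" and Y: "Y \<in> carrier_mat m n"
  shows "det (four_block_mat A B C D) = det (four_block_mat A B (Y * A + C) (Y * B + D))"
proof -
  let ?L = "four_block_mat (1\<^sub>m n) (0\<^sub>m n m) Y (1\<^sub>m m)"
  have "det ?L = 1"
    using Y by (subst det_four_block_mat_upper_right_zero[of _ n _ m]) auto
  moreover have "?L * four_block_mat A B C D = four_block_mat A B (Y * A + C) (Y * B + D)"
    using A B C D Y by (subst mult_four_block_mat) auto
  ultimately show ?thesis
    using det_mult[of ?L "n + m" "four_block_mat A B C D"] A B C D Y by auto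
qed

lemma det_four_block_hankel_col_op_right:
  fixes a :: "nat \<Rightarrow> 'a :: idom"
  assumes "\<And>j. b' j = b j + x * a j" and "\<And>j. d' j = d j + x * c j"
  shows "det (four_block_mat (hankel_mat N N a) (hankel_mat N N b) (hankel_mat N N c) (hankel_mat N N d))
    = det (four_block_mat (hankel_mat N N a) (hankel_mat N N b') (hankel_mat N N c) (hankel_mat N N d'))"
proof -
  have "b' = (\<lambda>j. x * a j + b j)" and "d' = (\<lambda>j. x * c j + d j)"
    using assms by (simp_all add: fun_eq_iff add.commute)
  then show ?thesis
    by (subst det_four_block_mat_col_op_right[where X = "x \<cdot>\<^sub>m 1\<^sub>m N"])
      (auto simp: hankel_mat_mult_smult_one add_hankel_mat)
qed

lemma det_four_block_hankel_col_op_left: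
  fixes a :: "nat \<Rightarrow> 'a :: idom"
  assumes "\<And>j. a' j = a j + x * b j" and "\<And>j. c' j = c j + x * d j"
  shows "det (four_block_mat (hankel_mat N N a) (hankel_mat N N b) (hankel_mat N N c) (hankel_mat N N d))
    = det (four_block_mat (hankel_mat N N a') (hankel_mat N N b) (hankel_mat N N c') (hankel_mat N N d))"
proof -
  have "a' = (\<lambda>j. a j + x * b j)" and "c' = (\<lambda>j. c j + x * d j)"
    using assms by (simp_all add: fun_eq_iff)
  then show ?thesis
    by (subst det_four_block_mat_col_op_left[where Y = "x \<cdot>\<^sub>m 1\<^sub>m N"])
      (auto simp: hankel_mat_mult_smult_one add_hankel_mat)
qed

lemma det_four_block_hankel_row_op_lower:
  fixes a :: "nat \<Rightarrow> 'a :: idom"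
  assumes "\<And>j. c' j = c j + x * a j" and "\<And>j. d' j = d j + x * b j"
  shows "det (four_block_mat (hankel_mat N N a) (hankel_mat N N b) (hankel_mat N N c) (hankel_mat N N d))
    = det (four_block_mat (hankel_mat N N a) (hankel_mat N N b) (hankel_mat N N c') (hankel_mat N N d'))"
proof -
  have "c' = (\<lambda>j. x * a j + c j)" and "d' = (\<lambda>j. x * b j + d j)"
    using assms by (simp_all add: fun_eq_iff add.commute)
  then show ?thesis
    by (subst det_four_block_mat_row_op_lower[where Y = "x \<cdot>\<^sub>m 1\<^sub>m N"])
      (auto simp: smult_one_mult_hankel_mat add_hankel_mat)
qed

lemma det_permute_rows_cols:
  fixes A :: "'a :: comm_ring_1 mat"
  assumes A: "A \<in> carrier_mat n n" and p: "p permutes {0..<n}"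
  shows "det (mat n n (\<lambda>(i, j). A $$ (p i, p j))) = det A"
proof -
  define B where "B = mat n n (\<lambda>(i, j). A $$ (p i, j))"
  define C where "C = mat n n (\<lambda>(i, j). transpose_mat B $$ (p i, j))"
  have B: "B \<in> carrier_mat n n" and C: "C \<in> carrier_mat n n"
    by (simp_all add: B_def C_def)
  have "mat n n (\<lambda>(i, j). A $$ (p i, p j)) = transpose_mat C"
    using permutes_in_image[OF p] by (intro eq_matI) (auto simp: B_def C_def)
  moreover have "det (transpose_mat C) = signof p * (signof p * det A)"
  proof -
    have "det C = signof p * det (transpose_mat B)"
      unfolding C_def using B p by (intro det_permute_rows) auto
    moreover have "det B = signof p * det A"
      unfolding B_def using A p by (rule det_permute_rows)
    ultimately show ?thesis
      using B C by (simp add: det_transpose)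
  qed
  moreover have "signof p * signof p = (1 :: 'a)"
    by (simp flip: of_int_mult)
  ultimately show ?thesis
    by (simp add: mult.assoc[symmetric])
qed

definition even_odd_perm :: "nat \<Rightarrow> nat \<Rightarrow> nat" where
  "even_odd_perm n i =
    (if i < (n + 1) div 2 then 2 * i else if i < n then 2 * (i - (n + 1) div 2) + 1 else i)"

lemma even_odd_perm_permutes: "even_odd_perm n permutes {0..<n}"
proof (rule bij_imp_permutes)
  have inj: "inj_on (even_odd_perm n) {0..<n}"
    unfolding inj_on_def even_odd_perm_def by (auto split: if_splits; presburger)
  have "even_odd_perm n ` {0..<n} \<subseteq> {0..<n}"
    unfolding even_odd_perm_def by (auto; presburger)
  then show "bij_betw (even_odd_perm n) {0..<n} {0..<n}"
    using inj by (simp add: bij_betw_def endo_inj_surj)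
  show "x \<notin> {0..<n} \<Longrightarrow> even_odd_perm n x = x" for x
    by (simp add: even_odd_perm_def)
qed

lemma det_hankel_mat_even_odd_blocks:
  fixes s :: "nat \<Rightarrow> 'a :: comm_ring_1"
  assumes k: "k = (n + 1) div 2" and m: "m = n div 2"
  shows "det (hankel_mat n n s) = det (four_block_mat
    (hankel_mat k k (\<lambda>j. s (2 * j))) (hankel_mat k m (\<lambda>j. s (2 * j + 1)))
    (hankel_mat m k (\<lambda>j. s (2 * j + 1))) (hankel_mat m m (\<lambda>j. s (2 * (j + 1)))))"
proof -
  let ?p = "even_odd_perm n"
  have "four_block_mat
      (hankel_mat k k (\<lambda>j. s (2 * j))) (hankel_mat k m (\<lambda>j. s (2 * j + 1)))
      (hankel_mat m k (\<lambda>j. s (2 * j + 1))) (hankel_mat m m (\<lambda>j. s (2 * (j + 1))))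
    = mat n n (\<lambda>(i, j). hankel_mat n n s $$ (?p i, ?p j))"
  proof (rule eq_matI)
    fix i j
    assume "i < dim_row (mat n n (\<lambda>(i, j). hankel_mat n n s $$ (?p i, ?p j)))"
      and "j < dim_col (mat n n (\<lambda>(i, j). hankel_mat n n s $$ (?p i, ?p j)))"
    then have i: "i < n" and j: "j < n"
      by auto
    then have "?p i < n" and "?p j < n"
      using permutes_in_image[OF even_odd_perm_permutes] by auto
    moreover have "?p i = (if i < k then 2 * i else 2 * (i - k) + 1)"
      and "?p j = (if j < k then 2 * j else 2 * (j - k) + 1)"
      using i j k by (simp_all add: even_odd_perm_def)
    moreover have "k + m = n"
      using k m by simp
    ultimately show "four_block_mat
        (hankel_mat k k (\<lambda>j. s (2 * j))) (hankel_mat k m (\<lambda>j. s (2 * j + 1)))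
        (hankel_mat m k (\<lambda>j. s (2 * j + 1))) (hankel_mat m m (\<lambda>j. s (2 * (j + 1)))) $$ (i, j)
      = mat n n (\<lambda>(i, j). hankel_mat n n s $$ (?p i, ?p j)) $$ (i, j)"
      using i j by (subst index_mat_four_block) (auto intro!: arg_cong[of _ _ s])
  qed (use k m in auto)
  then show ?thesis
    by (simp add: det_permute_rows_cols even_odd_perm_permutes)
qed

definition lower_bidiag_mat :: "nat \<Rightarrow> nat \<Rightarrow> 'a \<Rightarrow> 'a \<Rightarrow> 'a :: zero mat" where
  "lower_bidiag_mat k m x y = mat k m (\<lambda>(r, q). if r = q then x else if r = Suc q then y else 0)"

lemma lower_bidiag_mat_carrier [simp]: "lower_bidiag_mat k m x y \<in> carrier_mat k m"
  by (simp add: lower_bidiag_mat_def)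

lemma hankel_mat_mult_lower_bidiag_mat:
  fixes f :: "nat \<Rightarrow> 'a :: comm_ring_1"
  assumes "m \<le> k" and "y = 0 \<or> m < k"
  shows "hankel_mat r k f * lower_bidiag_mat k m x y = hankel_mat r m (\<lambda>j. x * f j + y * f (j + 1))"
proof (rule eq_matI)
  fix p q
  assume "p < dim_row (hankel_mat r m (\<lambda>j. x * f j + y * f (j + 1)))"
    and "q < dim_col (hankel_mat r m (\<lambda>j. x * f j + y * f (j + 1)))"
  then have p: "p < r" and q: "q < m"
    by auto
  have "(hankel_mat r k f * lower_bidiag_mat k m x y) $$ (p, q)
      = (\<Sum>i = 0..<k. (if i = q then x * f (p + i) else 0) + (if i = Suc q then y * f (p + i) else 0))"
    using p q by (auto simp: scalar_prod_def lower_bidiag_mat_def algebra_simps intro: sum.cong)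
  also have "\<dots> = x * f (p + q) + y * f (p + q + 1)"
    using q assms by (auto simp: sum.distrib)
  finally show "(hankel_mat r k f * lower_bidiag_mat k m x y) $$ (p, q)
      = hankel_mat r m (\<lambda>j. x * f j + y * f (j + 1)) $$ (p, q)"
    using p q by simp
qed (simp_all add: lower_bidiag_mat_def)

text \<open>Subtracting \<open>a\<close> times even column \<open>j\<close> and \<open>b\<close> times even column \<open>j + 1\<close> from odd column \<open>j\<close>
  clears the upper right block; for even \<open>n\<close> the last odd column has no even successor,
  whence the side condition.\<close>

lemma det_hankel_mat_eliminate_odd:
  fixes s :: "nat \<Rightarrow> 'a :: idom"
  assumes k: "k = (n + 1) div 2" and m: "m = n div 2"
    and odd_terms: "\<And>j. s (2 * j + 1) = a * s (2 * j) + b * s (2 * (j + 1))"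
    and b: "b = 0 \<or> odd n"
  shows "det (hankel_mat n n s) = det (hankel_mat k k (\<lambda>j. s (2 * j)))
    * det (hankel_mat m m (\<lambda>j. s (2 * (j + 1)) - a * s (2 * j + 1) - b * s (2 * (j + 1) + 1)))"
proof -
  let ?X = "lower_bidiag_mat k m (- a) (- b)"
  let ?A = "hankel_mat k k (\<lambda>j. s (2 * j))"
  let ?B = "hankel_mat k m (\<lambda>j. s (2 * j + 1))"
  let ?C = "hankel_mat m k (\<lambda>j. s (2 * j + 1))"
  let ?D = "hankel_mat m m (\<lambda>j. s (2 * (j + 1)))"
  have km: "m \<le> k" "- b = 0 \<or> m < k"
    using k m b by auto
  have "?A * ?X + ?B = 0\<^sub>m k m"
    using odd_terms by (auto simp: hankel_mat_mult_lower_bidiag_mat[OF km] add_hankel_mat)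
  moreover have "?C * ?X + ?D
      = hankel_mat m m (\<lambda>j. s (2 * (j + 1)) - a * s (2 * j + 1) - b * s (2 * (j + 1) + 1))"
    by (simp add: hankel_mat_mult_lower_bidiag_mat[OF km] add_hankel_mat algebra_simps)
  moreover have "det (hankel_mat n n s) = det (four_block_mat ?A (?A * ?X + ?B) ?C (?C * ?X + ?D))"
    by (subst det_hankel_mat_even_odd_blocks[OF k m])
      (rule det_four_block_mat_col_op_right[of _ k _ m]; simp)
  ultimately show ?thesis
    by (simp add: det_four_block_mat_upper_right_zero[of _ k _ m])
qed

definition tm_comb :: "complex \<Rightarrow> nat \<Rightarrow> complex" where
  "tm_comb e k = tm k + e * tm (k + 1)"

definition tm_diff2 :: "nat \<Rightarrow> complex" where
  "tm_diff2 k = tm (k + 2) - tm k"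

lemma tm_comb_double: "tm_comb e (2 * j) = (1 + \<i> * e) * tm j"
  by (simp add: tm_comb_def) (simp add: algebra_simps)

lemma tm_comb_Suc_double: "tm_comb e (2 * j + 1) = \<i> * tm j + e * tm (j + 1)"
  using tm_double[of "j + 1"] by (simp add: tm_comb_def)

lemma tm_diff2_double: "tm_diff2 (2 * j) = tm (j + 1) - tm j"
  using tm_double[of "j + 1"] by (simp add: tm_diff2_def)

lemma tm_diff2_Suc_double: "tm_diff2 (2 * j + 1) = \<i> * (tm (j + 1) - tm j)"
  using tm_Suc_double[of "j + 1"] by (simp add: tm_diff2_def) (simp add: algebra_simps)

lemma hankelH_eq: "hankelH n = (1 / (1 + \<i>)) \<cdot>\<^sub>m hankel_mat n n (tm_comb 1)"
  unfolding hankelH_def by (rule eq_matI) (auto simp: beta_Suc tm_comb_def)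

lemma det_hankel_tm:
  "det (hankel_mat n n tm) = det (hankel_mat ((n + 1) div 2) ((n + 1) div 2) tm)
    * det (hankel_mat (n div 2) (n div 2) (tm_comb 1))"
proof -
  have "det (hankel_mat n n tm) = det (hankel_mat ((n + 1) div 2) ((n + 1) div 2) (\<lambda>j. tm (2 * j)))
      * det (hankel_mat (n div 2) (n div 2)
          (\<lambda>j. tm (2 * (j + 1)) - \<i> * tm (2 * j + 1) - 0 * tm (2 * (j + 1) + 1)))"
    by (rule det_hankel_mat_eliminate_odd) simp_all
  moreover have "(\<lambda>j. tm (2 * (j + 1)) - \<i> * tm (2 * j + 1) - 0 * tm (2 * (j + 1) + 1)) = tm_comb 1"
    by (simp only: tm_double) (simp add: fun_eq_iff tm_comb_def)
  ultimately show ?thesis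
    by simp
qed

lemma det_hankel_tm_diff2:
  "det (hankel_mat n n tm_diff2) = (-1) ^ ((n + 1) div 2)
    * det (hankel_mat ((n + 1) div 2) ((n + 1) div 2) (tm_comb (-1)))
    * det (hankel_mat (n div 2) (n div 2) tm_diff2)"
proof -
  have "det (hankel_mat n n tm_diff2)
      = det (hankel_mat ((n + 1) div 2) ((n + 1) div 2) (\<lambda>j. tm_diff2 (2 * j)))
      * det (hankel_mat (n div 2) (n div 2)
          (\<lambda>j. tm_diff2 (2 * (j + 1)) - \<i> * tm_diff2 (2 * j + 1) - 0 * tm_diff2 (2 * (j + 1) + 1)))"
    by (rule det_hankel_mat_eliminate_odd)
      (simp_all only: tm_diff2_double tm_diff2_Suc_double, simp_all)
  moreover have "(\<lambda>j. tm_diff2 (2 * j)) = (\<lambda>j. -1 * tm_comb (-1) j)"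
    by (simp only: tm_diff2_double) (simp add: fun_eq_iff tm_comb_def)
  moreover have "(\<lambda>j. tm_diff2 (2 * (j + 1)) - \<i> * tm_diff2 (2 * j + 1) - 0 * tm_diff2 (2 * (j + 1) + 1))
      = tm_diff2"
    by (simp only: tm_diff2_double tm_diff2_Suc_double)
      (simp add: fun_eq_iff tm_diff2_def algebra_simps)
  ultimately show ?thesis
    by (simp only: det_hankel_mat_smult)
qed

lemma det_hankel_tm_comb_odd:
  assumes e: "e \<in> {1, -1}"
  shows "det (hankel_mat (2 * N + 1) (2 * N + 1) (tm_comb e))
    = (1 + \<i> * e) * (-1) ^ N * (det (hankel_mat (N + 1) (N + 1) tm) * det (hankel_mat N N tm_diff2))"
proof -
  define \<kappa> where "\<kappa> = 1 + \<i> * e"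
  have \<kappa>: "\<kappa> \<noteq> 0"
    using e by (auto simp: \<kappa>_def complex_eq_iff)
  have "det (hankel_mat (2 * N + 1) (2 * N + 1) (tm_comb e))
      = det (hankel_mat (N + 1) (N + 1) (\<lambda>j. tm_comb e (2 * j)))
      * det (hankel_mat N N (\<lambda>j. tm_comb e (2 * (j + 1)) - \<i> / \<kappa> * tm_comb e (2 * j + 1)
          - e / \<kappa> * tm_comb e (2 * (j + 1) + 1)))"
    using \<kappa> by (intro det_hankel_mat_eliminate_odd)
      (simp_all only: tm_comb_double tm_comb_Suc_double \<kappa>_def[symmetric], simp_all add: field_simps)
  moreover have "(\<lambda>j. tm_comb e (2 * j)) = (\<lambda>j. \<kappa> * tm j)"
    by (simp add: tm_comb_double \<kappa>_def)
  moreover have "(\<lambda>j. tm_comb e (2 * (j + 1)) - \<i> / \<kappa> * tm_comb e (2 * j + 1)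
      - e / \<kappa> * tm_comb e (2 * (j + 1) + 1)) = (\<lambda>j. - 1 / \<kappa> * tm_diff2 j)"
    using \<kappa> e by (simp only: tm_comb_double tm_comb_Suc_double \<kappa>_def[symmetric])
      (auto simp: fun_eq_iff tm_diff2_def field_simps \<kappa>_def)
  ultimately have "det (hankel_mat (2 * N + 1) (2 * N + 1) (tm_comb e))
      = \<kappa> ^ (N + 1) * det (hankel_mat (N + 1) (N + 1) tm) * ((- 1 / \<kappa>) ^ N * det (hankel_mat N N tm_diff2))"
    by (simp only: det_hankel_mat_smult)
  moreover have "\<kappa> ^ (N + 1) * (- 1 / \<kappa>) ^ N = \<kappa> * (- 1) ^ N"
    using \<kappa> by (simp add: mult.assoc flip: power_mult_distrib)
  ultimately show ?thesis
    unfolding \<kappa>_def[symmetric] by (metis mult.commute mult.left_commute)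
qed

lemma det_hankel_tm_comb_even:
  assumes e: "e \<in> {1, -1}"
  shows "det (hankel_mat (2 * N) (2 * N) (tm_comb e))
    = det (hankel_mat N N (tm_comb e)) * det (hankel_mat N N (tm_comb (- e)))"
proof -
  define \<kappa> where "\<kappa> = 1 + \<i> * e"
  have \<kappa>: "\<kappa> \<noteq> 0"
    using e by (auto simp: \<kappa>_def complex_eq_iff)
  have \<kappa>_sq: "\<kappa> * \<kappa> = 2 * \<i> * e"
    using e by (auto simp: \<kappa>_def algebra_simps)
  let ?H = "hankel_mat N N"
  have "det (hankel_mat (2 * N) (2 * N) (tm_comb e)) = det (four_block_mat
      (?H (\<lambda>j. \<kappa> * tm j)) (?H (\<lambda>j. \<i> * tm j + e * tm (j + 1)))
      (?H (\<lambda>j. \<i> * tm j + e * tm (j + 1))) (?H (\<lambda>j. \<kappa> * tm (j + 1))))"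
    by (subst det_hankel_mat_even_odd_blocks[of N _ N])
      (simp_all only: tm_comb_double tm_comb_Suc_double \<kappa>_def)
  also have "\<dots> = det (four_block_mat
      (?H (\<lambda>j. \<kappa> * tm j)) (?H (\<lambda>j. e * tm (j + 1)))
      (?H (\<lambda>j. \<i> * tm j + e * tm (j + 1))) (?H (\<lambda>j. 1 / \<kappa> * tm j + \<i> * e / \<kappa> * tm (j + 1))))"
    using \<kappa> \<kappa>_sq by (intro det_four_block_hankel_col_op_right[where x = "- \<i> / \<kappa>"])
      (auto simp: field_simps)
  also have "\<dots> = det (four_block_mat
      (?H (\<lambda>j. \<kappa> * tm j)) (?H (\<lambda>j. e * tm (j + 1)))
      (?H (\<lambda>j. e * tm (j + 1))) (?H (\<lambda>j. 1 / \<kappa> * tm j)))"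
    using \<kappa> by (intro det_four_block_hankel_row_op_lower[where x = "- \<i> / \<kappa>"])
      (auto simp: field_simps)
  also have "\<dots> = det (four_block_mat
      (?H (\<lambda>j. \<kappa> * tm_comb e j)) (?H (\<lambda>j. e * tm (j + 1)))
      (?H (tm_comb e)) (?H (\<lambda>j. 1 / \<kappa> * tm j)))"
    using \<kappa> by (intro det_four_block_hankel_col_op_left[where x = \<kappa>])
      (auto simp: tm_comb_def field_simps)
  also have "\<dots> = det (four_block_mat
      (?H (\<lambda>j. \<kappa> * tm_comb e j)) (?H (\<lambda>j. e * tm (j + 1)))
      (?H (\<lambda>_. 0)) (?H (\<lambda>j. 1 / \<kappa> * tm_comb (- e) j)))"
    using \<kappa> by (intro det_four_block_hankel_row_op_lower[where x = "- 1 / \<kappa>"])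
      (auto simp: tm_comb_def field_simps)
  also have "\<dots> = det (?H (\<lambda>j. \<kappa> * tm_comb e j)) * det (?H (\<lambda>j. 1 / \<kappa> * tm_comb (- e) j))"
    by (rule det_four_block_mat_lower_left_zero) auto
  finally have "det (hankel_mat (2 * N) (2 * N) (tm_comb e))
      = \<kappa> ^ N * det (?H (tm_comb e)) * ((1 / \<kappa>) ^ N * det (?H (tm_comb (- e))))"
    by (simp only: det_hankel_mat_smult)
  then show ?thesis
    using \<kappa> by (simp add: power_one_over)
qed

definition tm_comb_det :: "complex \<Rightarrow> nat \<Rightarrow> complex" where
  "tm_comb_det e n = (1 + \<i> * e) ^ n * (- \<i> * e) ^ (n div 2)"

lemma tm_comb_det_double:
  assumes "e \<in> {1, -1}"
  shows "tm_comb_det e (2 * N) = 2 ^ N"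
proof -
  have "(1 + \<i> * e) ^ 2 * (- \<i> * e) = 2"
    using assms by (auto simp: power2_eq_square algebra_simps)
  then show ?thesis
    unfolding tm_comb_det_def by (simp add: power_mult flip: power_mult_distrib)
qed

lemma tm_comb_det_Suc_double:
  assumes "e \<in> {1, -1}"
  shows "tm_comb_det e (2 * N + 1) = (1 + \<i> * e) * 2 ^ N"
  using tm_comb_det_double[OF assms, of N] by (simp add: tm_comb_det_def)

lemma tm_comb_det_mult_neg:
  assumes "e \<in> {1, -1}"
  shows "tm_comb_det e n * tm_comb_det (- e) n = 2 ^ n"
proof -
  have "(1 + \<i> * e) * (1 + \<i> * - e) = 2" and "(- \<i> * e) * (- \<i> * - e) = 1"
    using assms by (auto simp: algebra_simps)
  then show ?thesis
    unfolding tm_comb_det_def by (simp add: mult_ac flip: power_mult_distrib)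
qed

lemma det_hankel_tm_mult_diff2_step:
  assumes comb: "\<And>e. e \<in> {1, -1} \<Longrightarrow>
      det (hankel_mat ((n + 1) div 2) ((n + 1) div 2) (tm_comb e)) = tm_comb_det e ((n + 1) div 2)"
    and half: "det (hankel_mat (n div 2 + 1) (n div 2 + 1) tm) * det (hankel_mat (n div 2) (n div 2) tm_diff2)
      = (-2) ^ (n div 2)"
  shows "det (hankel_mat (n + 1) (n + 1) tm) * det (hankel_mat n n tm_diff2) = (-2) ^ n"
proof -
  let ?c = "(n + 1) div 2"
  have "det (hankel_mat (n + 1) (n + 1) tm) * det (hankel_mat n n tm_diff2)
      = (-1) ^ ?c * (det (hankel_mat ?c ?c (tm_comb 1)) * det (hankel_mat ?c ?c (tm_comb (-1))))
        * (det (hankel_mat (n div 2 + 1) (n div 2 + 1) tm) * det (hankel_mat (n div 2) (n div 2) tm_diff2))"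
    using det_hankel_tm[of "n + 1"] det_hankel_tm_diff2[of n] by (simp add: mult_ac)
  also have "\<dots> = (-1) ^ ?c * 2 ^ ?c * (-2) ^ (n div 2)"
    using comb tm_comb_det_mult_neg[of 1 ?c] half by simp
  also have "\<dots> = (-2) ^ (?c + n div 2)"
    by (simp add: power_add flip: power_mult_distrib)
  also have "?c + n div 2 = n"
    by presburger
  finally show ?thesis .
qed

lemma det_hankel_tm_closed_forms:
  "(\<forall>e \<in> {1, -1}. det (hankel_mat n n (tm_comb e)) = tm_comb_det e n)
    \<and> det (hankel_mat (n + 1) (n + 1) tm) * det (hankel_mat n n tm_diff2) = (-2) ^ n"
proof (induction n rule: less_induct)
  case (less n)
  have comb: "det (hankel_mat n n (tm_comb e)) = tm_comb_det e n" if e: "e \<in> {1, -1}" for e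
  proof (cases "even n")
    case True
    then obtain N where n: "n = 2 * N"
      by blast
    show ?thesis
    proof (cases "N = 0")
      case True
      then show ?thesis
        using n by (simp add: tm_comb_det_def)
    next
      case False
      then have "det (hankel_mat N N (tm_comb e')) = tm_comb_det e' N" if "e' \<in> {1, -1}" for e'
        using less.IH[of N] that n by auto
      then have "det (hankel_mat n n (tm_comb e)) = tm_comb_det e N * tm_comb_det (- e) N"
        using e n det_hankel_tm_comb_even by auto
      then show ?thesis
        using tm_comb_det_mult_neg[OF e] tm_comb_det_double[OF e] n by simp
    qed
  next
    case False
    then obtain N where n: "n = 2 * N + 1"
      using oddE by blast
    then have "det (hankel_mat (N + 1) (N + 1) tm) * det (hankel_mat N N tm_diff2) = (-2) ^ N"
      using less.IH[of N] by simp
    then show ?thesis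
      using e n det_hankel_tm_comb_odd tm_comb_det_Suc_double
      by (simp add: power_mult_distrib[symmetric])
  qed
  have "det (hankel_mat (n + 1) (n + 1) tm) * det (hankel_mat n n tm_diff2) = (-2) ^ n"
  proof (cases "n = 0")
    case True
    then show ?thesis
      by (simp add: det_single)
  next
    case False
    show ?thesis
    proof (rule det_hankel_tm_mult_diff2_step)
      have "(n + 1) div 2 \<le> n"
        by simp
      then show "det (hankel_mat ((n + 1) div 2) ((n + 1) div 2) (tm_comb e)) = tm_comb_det e ((n + 1) div 2)"
        if "e \<in> {1, -1}" for e
        using comb less.IH that by (cases "(n + 1) div 2 = n") auto
      show "det (hankel_mat (n div 2 + 1) (n div 2 + 1) tm) * det (hankel_mat (n div 2) (n div 2) tm_diff2)
          = (-2) ^ (n div 2)"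
        using less.IH[of "n div 2"] False by simp
    qed
  qed
  with comb show ?case
    by blast
qed

theorem mainTheorem20:
  fixes n :: nat
  assumes "n \<ge> 1"
  shows "det (hankelH n) = (- \<i>) ^ (n div 2)"
proof -
  have "1 + \<i> \<noteq> 0"
    by (simp add: complex_eq_iff)
  moreover have "det (hankelH n) = (1 / (1 + \<i>)) ^ n * tm_comb_det 1 n"
    using det_hankel_tm_closed_forms[of n] by (simp add: hankelH_eq)
  ultimately show ?thesis
    by (simp add: tm_comb_det_def power_one_over)
qed

end
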